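(* Let $B_1,\dots,B_n$ be components with pairwise disjoint action sets and $\gamma$ a set of interactions over them. For each action $a\in\mathit{Act}(\gamma)$ let $k_a\ge0$ be a constant such that, in every execution of the component owning $a$, any two consecutive executions of $a$ are separated by at least $k_a$ time units. Let $\mathit{CI}(B_i^h)$ be the component invariants and $\mathit{II}(\gamma)$ the interaction invariant. Then $\Phi=\exists\mathcal{H}_A\exists\mathcal{H}_\gamma.\big(\bigwedge_i\mathit{CI}(B_i^h)\wedge\mathit{II}(\gamma)\wedge\mathcal{E}^*(\gamma)\wedge\mathcal{S}(\gamma)\big)$ is an invariant of $\|_\gamma B_i$.
   Context: Components and semantics: a component is a timed automaton $B=(L,A,\mathcal{X},T,\mathsf{tpc},s_0)$ with locations $L$, actions $A$, clocks $\mathcal{X}$, edges $(l,(a,g,r),l')\in T$ (action, clock-constraint guard, reset set), time progress conditions $\mathsf{tpc}(l)$, initial configuration $s_0=(l_0,c_0)$. States $(l,\mathbf{v})$, $\mathbf{v}$ a valuation in $\mathbb{R}_{\ge0}$; time transitions $(l,\mathbf{v})\xrightarrow{\delta}(l,\mathbf{v}+\delta)$ if $\mathsf{tpc}(l)$ holds along $[0,\delta]$; discrete transitions $(l,\mathbf{v})\xrightarrow{a}(l',\mathbf{v}[r])$ if $(l,(a,g,r),l')\in T$, $\mathbf{v}\models g$, $\mathbf{v}[r]\models\mathsf{tpc}(l')$; initial states $(l_0,\mathbf{v}_0)$ with $\mathbf{v}_0\models c_0$. A state predicate is an invariant if it holds in every reachable state. Systems: for components $B_i$ with pairwise disjoint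 action sets $A_i$, an interaction is a nonempty $\alpha\subseteq\bigcup_iA_i$ with at most one action per component; $\mathit{Act}(\gamma)=\bigcup_{\alpha\in\gamma}\alpha$. $\|_\gamma B_i$ has locations $\times_iL_i$, clocks $\bigcup_i\mathcal{X}_i$, conjunction of tpc's and initial constraints, and for each $\alpha=\{a_i\}_{i\in I}\in\gamma$ and edges $(l_i,(a_i,g_i,r_i),l'_i)\in T_i$ ($i\in I$) a joint edge with guard $\bigwedge_{i\in I}g_i$, reset $\bigcup_{i\in I}r_i$, moving exactly the components in $I$. History clocks: $B^h$ adds fresh clocks $h_0$ and $h_a$ ($a\in A$), adds $h_a$ to the resets of each edge labelled $a$, initial constraint $c_0\wedge h_0=0\wedge\bigwedge_{a\in A}h_a>0$; $h_0$ is shared by all components and never reset nor tested; $\mathcal{H}_A$ is the set of $h_0$ and all $h_a$, $a\in\bigcup_iA_i$. Interaction history clocks $\mathcal{H}_\gamma=\{h_\alpha\mid\alpha\in\gamma\}$ (in the extended system they are reset exactly when $\alpha$ is executed). $\exists S$ quantifies over nonnegative reals. Invariants used: $\mathit{CI}(B^h)$ is the disjunction of $\mathit{at}(l)\wedge\zeta$ over all symbolic states $(l,\zeta)$ reachable in the (normalised) zone graph of $B^h$; it is an invariant of $B^h$. $\mathit{II}(\gamma)$ is a predicate over locations only which is an invariant of $\|_\gamma B_i$. Glue constraints: $\mathcal{E}^*(\gamma)=\bigwedge_{a\in\mathit{Act}(\gamma)}h_a=\min_{\alpha\in\gamma,\,a\in\alpha}h_\alpha$ and $\mathcal{S}(\gamma)=\bigwedge_{a\in\mathit{Act}(\gamma)}\bigwedge_{\alpha\ne\beta\in\gamma,\,a\in\alpha\cap\beta}|h_\alpha-h_\beta|\ge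 k_a$. *)

theory Defs
  imports Complex_Main
begin

type_synonym ('l,'a,'c) edge = "'l \<times> 'a \<times> (('c \<Rightarrow> real) \<Rightarrow> bool) \<times> 'c set \<times> 'l"

record ('l,'a,'c) ta =
  acts  :: "'a set"
  edges :: "('l,'a,'c) edge set"
  tpc   :: "'l \<Rightarrow> ('c \<Rightarrow> real) \<Rightarrow> bool"
  loc0  :: "'l"
  c0    :: "('c \<Rightarrow> real) \<Rightarrow> bool"

definition esrc :: "('l,'a,'c) edge \<Rightarrow> 'l" where "esrc e = fst e"
definition eact :: "('l,'a,'c) edge \<Rightarrow> 'a" where "eact e = fst (snd e)"
definition eguard :: "('l,'a,'c) edge \<Rightarrow> ('c \<Rightarrow> real) \<Rightarrow> bool" where
  "eguard e = fst (snd (snd e))"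
definition ereset :: "('l,'a,'c) edge \<Rightarrow> 'c set" where "ereset e = fst (snd (snd (snd e)))"
definition etgt :: "('l,'a,'c) edge \<Rightarrow> 'l" where "etgt e = snd (snd (snd (snd e)))"

definition vshift :: "('c \<Rightarrow> real) \<Rightarrow> real \<Rightarrow> ('c \<Rightarrow> real)" where
  "vshift v d = (\<lambda>x. v x + d)"

definition vreset :: "('c \<Rightarrow> real) \<Rightarrow> 'c set \<Rightarrow> ('c \<Rightarrow> real)" where
  "vreset v r = (\<lambda>x. if x \<in> r then 0 else v x)"

datatype 'a label = Del real | Dis 'a

inductive step :: "('l,'a,'c,'z) ta_scheme \<Rightarrow> 'l \<times> ('c \<Rightarrow> real) \<Rightarrow> 'a label \<Rightarrow> 'l \<times> ('c \<Rightarrow> real) \<Rightarrow> bool"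
  for B where
  delay: "\<lbrakk> d \<ge> 0; \<forall>t\<in>{0..d}. tpc B l (vshift v t) \<rbrakk> \<Longrightarrow> step B (l, v) (Del d) (l, vshift v d)"
| disc: "\<lbrakk> (l, a, g, r, l') \<in> edges B; g v; tpc B l' (vreset v r) \<rbrakk>
          \<Longrightarrow> step B (l, v) (Dis a) (l', vreset v r)"

definition initial :: "('l,'a,'c,'z) ta_scheme \<Rightarrow> 'l \<times> ('c \<Rightarrow> real) \<Rightarrow> bool" where
  "initial B s \<longleftrightarrow> fst s = loc0 B \<and> (\<forall>x. snd s x \<ge> 0) \<and> c0 B (snd s)"

inductive reachable :: "('l,'a,'c,'z) ta_scheme \<Rightarrow> 'l \<times> ('c \<Rightarrow> real) \<Rightarrow> bool" for B where
  init: "initial B s \<Longrightarrow> reachable B s"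
| stp: "\<lbrakk> reachable B s; step B s lb s' \<rbrakk> \<Longrightarrow> reachable B s'"

definition invariant :: "('l,'a,'c,'z) ta_scheme \<Rightarrow> ('l \<times> ('c \<Rightarrow> real) \<Rightarrow> bool) \<Rightarrow> bool" where
  "invariant B P \<longleftrightarrow> (\<forall>s. reachable B s \<longrightarrow> P s)"

definition run :: "('l,'a,'c,'z) ta_scheme \<Rightarrow> ('l \<times> ('c \<Rightarrow> real)) list \<Rightarrow> 'a label list \<Rightarrow> bool" where
  "run B ss ls \<longleftrightarrow> length ss = Suc (length ls) \<and> initial B (ss ! 0)
     \<and> (\<forall>i < length ls. step B (ss ! i) (ls ! i) (ss ! Suc i))"

fun delay_of :: "'a label \<Rightarrow> real" where
  "delay_of (Del d) = d"
| "delay_of (Dis _) = 0"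

definition min_sep :: "('l,'a,'c,'z) ta_scheme \<Rightarrow> 'a \<Rightarrow> real \<Rightarrow> bool" where
  "min_sep B a k \<longleftrightarrow> (\<forall>ss ls. run B ss ls \<longrightarrow>
     (\<forall>i j. i < j \<and> j < length ls \<and> ls ! i = Dis a \<and> ls ! j = Dis a
        \<and> (\<forall>m. i < m \<and> m < j \<longrightarrow> ls ! m \<noteq> Dis a)
        \<longrightarrow> k \<le> (\<Sum>m\<in>{i<..<j}. delay_of (ls ! m))))"

datatype ('a,'c) hclock = Orig 'c | H0 | HA 'a

definition hist :: "('l,'a,'c) ta \<Rightarrow> ('l,'a,('a,'c) hclock) ta" where
  "hist B = \<lparr> acts = acts B,
     edges = (\<lambda>(l, a, g, r, l'). (l, a, (\<lambda>w. g (w \<circ> Orig)), Orig ` r \<union> {HA a}, l')) ` edges B,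
     tpc = (\<lambda>l w. tpc B l (w \<circ> Orig)),
     loc0 = loc0 B,
     c0 = (\<lambda>w. c0 B (w \<circ> Orig) \<and> w H0 = 0 \<and> (\<forall>a\<in>acts B. w (HA a) > 0)) \<rparr>"

text \<open>Component i is B i (i < n). Its action a is the global action (i, a) and its
clock c the global clock (i, c) (pairwise disjoint by construction).
An interaction is a set of global actions.\<close>

definition view :: "(nat \<times> 'c \<Rightarrow> real) \<Rightarrow> nat \<Rightarrow> ('c \<Rightarrow> real)" where
  "view V i = (\<lambda>c. V (i, c))"

definition wf_interactions :: "nat \<Rightarrow> (nat \<Rightarrow> ('l,'a,'c) ta) \<Rightarrow> (nat \<times> 'a) set set \<Rightarrow> bool" where
  "wf_interactions n B \<gamma> \<longleftrightarrow> (\<forall>\<alpha>\<in>\<gamma>. \<alpha> \<noteq> {}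
     \<and> (\<forall>(i, a)\<in>\<alpha>. i < n \<and> a \<in> acts (B i))
     \<and> (\<forall>(i, a)\<in>\<alpha>. \<forall>(j, b)\<in>\<alpha>. i = j \<longrightarrow> a = b))"

definition compose :: "nat \<Rightarrow> (nat \<Rightarrow> ('l,'a,'c) ta) \<Rightarrow> (nat \<times> 'a) set set
    \<Rightarrow> (nat \<Rightarrow> 'l, (nat \<times> 'a) set, nat \<times> 'c) ta" where
  "compose n B \<gamma> = \<lparr> acts = \<gamma>,
     edges = {(L, \<alpha>, g, r, L') | L \<alpha> g r L'. \<alpha> \<in> \<gamma> \<and>
        (\<exists>e. (\<forall>i a. (i, a) \<in> \<alpha> \<longrightarrow> e i \<in> edges (B i) \<and> esrc (e i) = L i \<and> eact (e i) = a)
           \<and> g = (\<lambda>V. \<forall>i\<in>fst ` \<alpha>. eguard (e i) (view V i))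
           \<and> r = {(i, c). i \<in> fst ` \<alpha> \<and> c \<in> ereset (e i)}
           \<and> L' = (\<lambda>j. if j \<in> fst ` \<alpha> then etgt (e j) else L j))},
     tpc = (\<lambda>L V. \<forall>i<n. tpc (B i) (L i) (view V i)),
     loc0 = (\<lambda>i. loc0 (B i)),
     c0 = (\<lambda>V. \<forall>i<n. c0 (B i) (view V i)) \<rparr>"

text \<open>Valuation of the clocks of B_i^h induced by the system valuation V, the
shared clock h0 and the action history clocks ha.\<close>
definition hview :: "(nat \<times> 'c \<Rightarrow> real) \<Rightarrow> real \<Rightarrow> (nat \<times> 'a \<Rightarrow> real) \<Rightarrow> nat
    \<Rightarrow> (('a,'c) hclock \<Rightarrow> real)" where
  "hview V h0 ha i = (\<lambda>x. case x of Orig c \<Rightarrow> V (i, c) | H0 \<Rightarrow> h0 | HA a \<Rightarrow> ha (i, a))"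

definition Estar :: "(nat \<times> 'a) set set \<Rightarrow> (nat \<times> 'a \<Rightarrow> real) \<Rightarrow> ((nat \<times> 'a) set \<Rightarrow> real) \<Rightarrow> bool" where
  "Estar \<gamma> ha hg \<longleftrightarrow> (\<forall>a\<in>\<Union>\<gamma>. ha a = Min (hg ` {\<alpha>\<in>\<gamma>. a \<in> \<alpha>}))"

definition Sep :: "(nat \<times> 'a) set set \<Rightarrow> (nat \<times> 'a \<Rightarrow> real) \<Rightarrow> ((nat \<times> 'a) set \<Rightarrow> real) \<Rightarrow> bool" where
  "Sep \<gamma> k hg \<longleftrightarrow> (\<forall>a\<in>\<Union>\<gamma>. \<forall>\<alpha>\<in>\<gamma>. \<forall>\<beta>\<in>\<gamma>. \<alpha> \<noteq> \<beta> \<and> a \<in> \<alpha> \<and> a \<in> \<beta> \<longrightarrow> \<bar>hg \<alpha> - hg \<beta>\<bar> \<ge> k a)"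

definition Phi :: "nat \<Rightarrow> (nat \<times> 'a) set set \<Rightarrow> (nat \<Rightarrow> 'l \<times> (('a,'c) hclock \<Rightarrow> real) \<Rightarrow> bool)
    \<Rightarrow> ((nat \<Rightarrow> 'l) \<Rightarrow> bool) \<Rightarrow> (nat \<times> 'a \<Rightarrow> real) \<Rightarrow> (nat \<Rightarrow> 'l) \<times> (nat \<times> 'c \<Rightarrow> real) \<Rightarrow> bool" where
  "Phi n \<gamma> CI II k s \<longleftrightarrow> (\<exists>h0 ha hg. h0 \<ge> 0 \<and> (\<forall>x. ha x \<ge> 0) \<and> (\<forall>\<alpha>\<in>\<gamma>. hg \<alpha> \<ge> 0)
     \<and> (\<forall>i<n. CI i (fst s i, hview (snd s) h0 ha i))
     \<and> II (fst s) \<and> Estar \<gamma> ha hg \<and> Sep \<gamma> k hg)"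

end

theory Submission
  imports Defs
begin

text \<open>We prove a stronger invariant of the composed system by induction over its executions:
the history clocks \<open>h\<^sub>0\<close>, \<open>h\<^sub>a\<close>, \<open>h\<^sub>\<alpha>\<close> can be given values such that every component
state, extended by them, is reachable in \<open>B\<^sub>i\<^sup>h\<close>, each \<open>h\<^sub>a\<close> is at least the time since the
last execution of \<open>a\<close>, and \<open>E\<^sup>*(\<gamma>)\<close> and \<open>S(\<gamma>)\<close> hold. Initially the \<open>h\<^sub>\<alpha>\<close> are only required
to be positive, so they can be placed pairwise far apart. Delays shift all history clocks
uniformly. Executing \<open>\<alpha>\<close> resets \<open>h\<^sub>\<alpha>\<close> and the \<open>h\<^sub>a\<close> with \<open>a \<in> \<alpha>\<close>; \<open>S(\<gamma>)\<close> survives because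
each such \<open>a\<close> was last executed at least \<open>k\<^sub>a\<close> ago, whence \<open>k\<^sub>a \<le> h\<^sub>a \<le> h\<^sub>\<beta>\<close> for every other
interaction \<open>\<beta>\<close> containing \<open>a\<close>. Reachability in \<open>B\<^sub>i\<^sup>h\<close> then gives \<open>CI(B\<^sub>i\<^sup>h)\<close>.\<close>

definition last_occ :: "'a label list \<Rightarrow> 'a \<Rightarrow> nat \<Rightarrow> bool" where
  "last_occ ls a j \<longleftrightarrow> j < length ls \<and> ls ! j = Dis a
     \<and> (\<forall>m. j < m \<and> m < length ls \<longrightarrow> ls ! m \<noteq> Dis a)"

definition time_since :: "'a label list \<Rightarrow> nat \<Rightarrow> real" where
  "time_since ls j = (\<Sum>m\<in>{j<..<length ls}. delay_of (ls ! m))"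

text \<open>\<open>h\<close> plays the role of the history clock of \<open>a\<close> after the trace \<open>ls\<close>; before the first
occurrence of \<open>a\<close> it must already be at least the separation \<open>k\<close>, as if \<open>a\<close> had happened
\<open>k\<close> time units before the start.\<close>
definition elapsed_bound :: "'a label list \<Rightarrow> 'a \<Rightarrow> real \<Rightarrow> real \<Rightarrow> bool" where
  "elapsed_bound ls a k h \<longleftrightarrow>
     (Dis a \<notin> set ls \<longrightarrow> k \<le> h) \<and> (\<forall>j. last_occ ls a j \<longrightarrow> time_since ls j \<le> h)"

lemma time_since_snoc:
  assumes "j < length ls"
  shows "time_since (ls @ [lb]) j = time_since ls j + delay_of lb"
proof -
  have "{j<..<length (ls @ [lb])} = insert (length ls) {j<..<length ls}"
    using assms by auto
  moreover have "(\<Sum>m\<in>{j<..<length ls}. delay_of ((ls @ [lb]) ! m)) = time_since ls j"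
    unfolding time_since_def by (rule sum.cong) (auto simp: nth_append)
  ultimately show ?thesis
    by (simp add: time_since_def nth_append)
qed

lemma last_occ_snoc_other:
  assumes "lb \<noteq> Dis a"
  shows "last_occ (ls @ [lb]) a j \<longleftrightarrow> last_occ ls a j"
proof
  assume occ: "last_occ (ls @ [lb]) a j"
  then have "j < length ls"
    using assms by (auto simp: last_occ_def nth_append less_Suc_eq split: if_splits)
  with occ show "last_occ ls a j"
    by (auto simp: last_occ_def nth_append)
next
  assume "last_occ ls a j"
  then show "last_occ (ls @ [lb]) a j"
    using assms by (auto simp: last_occ_def nth_append less_Suc_eq)
qed

lemma last_occ_snoc_self: "last_occ (ls @ [Dis a]) a j \<longleftrightarrow> j = length ls"
proof
  assume "last_occ (ls @ [Dis a]) a j"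
  then have "j < Suc (length ls)" "\<not> j < length ls"
    by (auto simp: last_occ_def dest: spec[of _ "length ls"])
  then show "j = length ls"
    by simp
qed (auto simp: last_occ_def)

lemma last_occ_exists:
  assumes "Dis a \<in> set ls"
  obtains j where "last_occ ls a j"
proof -
  define J where "J = {j. j < length ls \<and> ls ! j = Dis a}"
  have "finite J"
    unfolding J_def by simp
  moreover have "J \<noteq> {}"
    using assms by (auto simp: J_def in_set_conv_nth)
  ultimately have max_in: "Max J \<in> J" and max_ge: "\<And>m. m \<in> J \<Longrightarrow> m \<le> Max J"
    by auto
  have "last_occ ls a (Max J)"
    unfolding last_occ_def
  proof (intro conjI allI impI)
    show "Max J < length ls" "ls ! Max J = Dis a"
      using max_in by (auto simp: J_def)
    fix m assume "Max J < m \<and> m < length ls"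
    then have "m \<notin> J"
      using max_ge[of m] by auto
    then show "ls ! m \<noteq> Dis a"
      using \<open>Max J < m \<and> m < length ls\<close> by (simp add: J_def)
  qed
  then show ?thesis ..
qed

lemma elapsed_bound_snoc:
  assumes "elapsed_bound ls a k h" "lb \<noteq> Dis a" "0 \<le> delay_of lb"
  shows "elapsed_bound (ls @ [lb]) a k (h + delay_of lb)"
  using assms unfolding elapsed_bound_def last_occ_snoc_other[OF assms(2)]
  by (auto simp: last_occ_def time_since_snoc)

lemma elapsed_bound_snoc_self: "elapsed_bound (ls @ [Dis a]) a k 0"
proof -
  have "{length ls<..<length (ls @ [Dis a])} = {}"
    by auto
  then show ?thesis
    by (simp add: elapsed_bound_def last_occ_snoc_self time_since_def)
qed

lemma run_snoc:
  assumes "run B ss ls" "step B (ss ! length ls) lb s'"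
  shows "run B (ss @ [s']) (ls @ [lb])"
  using assms unfolding run_def by (auto simp: nth_append less_Suc_eq)

lemma step_delay_nonneg: "step B s lb s' \<Longrightarrow> 0 \<le> delay_of lb"
  by (induction rule: step.induct) auto

lemma min_sep_le_elapsed_bound:
  assumes run: "run B ss ls" and next_step: "step B (ss ! length ls) (Dis a) s'"
    and sep: "min_sep B a k" and bound: "elapsed_bound ls a k h"
  shows "k \<le> h"
proof (cases "Dis a \<in> set ls")
  case False
  then show ?thesis
    using bound by (simp add: elapsed_bound_def)
next
  case True
  then obtain j where occ: "last_occ ls a j"
    by (rule last_occ_exists)
  have "run B (ss @ [s']) (ls @ [Dis a])"
    using run next_step by (rule run_snoc)
  then have "k \<le> (\<Sum>m\<in>{j<..<length ls}. delay_of ((ls @ [Dis a]) ! m))"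
    using sep occ unfolding min_sep_def last_occ_def
    by (elim allE[of _ "ss @ [s']"] allE[of _ "ls @ [Dis a]"] allE[of _ j] allE[of _ "length ls"])
       (auto simp: nth_append)
  also have "\<dots> = time_since ls j"
    unfolding time_since_def by (rule sum.cong) (auto simp: nth_append)
  also have "\<dots> \<le> h"
    using bound occ by (simp add: elapsed_bound_def)
  finally show ?thesis .
qed

lemma vshift_comp: "vshift w d \<circ> f = vshift (w \<circ> f) d"
  by (auto simp: vshift_def)

lemma vreset_hist_Orig: "vreset w (Orig ` r \<union> {HA a}) \<circ> Orig = vreset (w \<circ> Orig) r"
  by (auto simp: vreset_def)

lemma edges_hist:
  "(l, a, g, r, l') \<in> edges B \<Longrightarrow> (l, a, \<lambda>w. g (w \<circ> Orig), Orig ` r \<union> {HA a}, l') \<in> edges (hist B)"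
  by (force simp: hist_def)

lemma tpc_hist [simp]: "tpc (hist B) l w = tpc B l (w \<circ> Orig)"
  by (simp add: hist_def)

lemma edges_histE:
  assumes "(l, a, g, r, l') \<in> edges (hist B)"
  obtains g0 r0 where "(l, a, g0, r0, l') \<in> edges B" "g = (\<lambda>w. g0 (w \<circ> Orig))"
    "r = Orig ` r0 \<union> {HA a}"
  using assms by (auto simp: hist_def)

lemma hist_step_Orig:
  assumes "step (hist B) s lb s'"
  shows "step B (fst s, snd s \<circ> Orig) lb (fst s', snd s' \<circ> Orig)"
  using assms
proof cases
  case (delay d l v)
  then show ?thesis
    by (auto simp: vshift_comp intro: step.delay)
next
  case (disc l a g r l' v)
  then obtain g0 r0 where "(l, a, g0, r0, l') \<in> edges B" "g = (\<lambda>w. g0 (w \<circ> Orig))"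
      "r = Orig ` r0 \<union> {HA a}"
    by (auto elim: edges_histE)
  with disc show ?thesis
    by (simp only: vreset_hist_Orig tpc_hist fst_conv snd_conv) (rule step.disc)
qed

lemma hist_step_HA:
  assumes "step (hist B) s lb s'"
  shows "snd s' (HA b) = (case lb of Del d \<Rightarrow> snd s (HA b) + d
                                   | Dis a \<Rightarrow> if b = a then 0 else snd s (HA b))"
  using assms
proof cases
  case (delay d l v)
  then show ?thesis
    by (simp add: vshift_def)
next
  case (disc l a g r l' v)
  then have "HA b \<in> r \<longleftrightarrow> b = a"
    by (auto simp: hist_def)
  with disc show ?thesis
    by (simp add: vreset_def)
qed

lemma initial_hist_Orig: "initial (hist B) s \<Longrightarrow> initial B (fst s, snd s \<circ> Orig)"
  by (simp add: initial_def hist_def)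

definition hist_consistent ::
    "('l,'a,'c) ta \<Rightarrow> 'a set \<Rightarrow> ('a \<Rightarrow> real) \<Rightarrow> 'l \<times> (('a,'c) hclock \<Rightarrow> real) \<Rightarrow> bool" where
  "hist_consistent B A k s \<longleftrightarrow> reachable (hist B) s \<and>
     (\<exists>ss ls. run B ss ls \<and> ss ! length ls = (fst s, snd s \<circ> Orig)
        \<and> (\<forall>a\<in>A. elapsed_bound ls a (k a) (snd s (HA a))))"

lemma hist_consistent_initial:
  assumes "initial (hist B) s" "\<forall>a\<in>A. k a \<le> snd s (HA a)"
  shows "hist_consistent B A k s"
  unfolding hist_consistent_def
proof (intro conjI exI)
  show "reachable (hist B) s"
    using assms(1) by (rule reachable.init)
  show "run B [(fst s, snd s \<circ> Orig)] []"
    using initial_hist_Orig[OF assms(1)] by (simp add: run_def)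
qed (use assms(2) in \<open>auto simp: elapsed_bound_def last_occ_def\<close>)

lemma hist_consistent_step:
  assumes cons: "hist_consistent B A k s" and hstep: "step (hist B) s lb s'"
  shows "hist_consistent B A k s'"
proof -
  obtain ss ls where run: "run B ss ls" and last: "ss ! length ls = (fst s, snd s \<circ> Orig)"
    and bounds: "\<forall>a\<in>A. elapsed_bound ls a (k a) (snd s (HA a))"
    using cons by (auto simp: hist_consistent_def)
  have "run B (ss @ [(fst s', snd s' \<circ> Orig)]) (ls @ [lb])"
    using run hist_step_Orig[OF hstep] by (simp add: last run_snoc)
  moreover have "elapsed_bound (ls @ [lb]) a (k a) (snd s' (HA a))" if "a \<in> A" for a
  proof (cases "lb = Dis a")
    case True
    then show ?thesis
      using hist_step_HA[OF hstep, of a] by (simp add: elapsed_bound_snoc_self)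
  next
    case False
    have "snd s' (HA a) = snd s (HA a) + delay_of lb"
      using hist_step_HA[OF hstep, of a] False by (cases lb) auto
    then show ?thesis
      using elapsed_bound_snoc[OF bounds[rule_format, OF that] False]
        step_delay_nonneg[OF hstep] by simp
  qed
  moreover have "length ss = Suc (length ls)"
    using run by (simp add: run_def)
  moreover have "reachable (hist B) s'"
    using cons hstep by (auto simp: hist_consistent_def intro: reachable.stp)
  ultimately show ?thesis
    unfolding hist_consistent_def
    by (intro conjI exI[of _ "ss @ [(fst s', snd s' \<circ> Orig)]"] exI[of _ "ls @ [lb]"])
       (auto simp: nth_append)
qed

lemma hist_consistent_le_HA:
  assumes cons: "hist_consistent B A k s" and "a \<in> A" "min_sep B a (k a)"
    and hstep: "step (hist B) s (Dis a) s'"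
  shows "k a \<le> snd s (HA a)"
proof -
  obtain ss ls where run: "run B ss ls" and last: "ss ! length ls = (fst s, snd s \<circ> Orig)"
    and bounds: "\<forall>a\<in>A. elapsed_bound ls a (k a) (snd s (HA a))"
    using cons by (auto simp: hist_consistent_def)
  show ?thesis
    using min_sep_le_elapsed_bound[OF run _ \<open>min_sep B a (k a)\<close>] hist_step_Orig[OF hstep]
      bounds \<open>a \<in> A\<close> by (simp add: last)
qed

lemma Estar_le:
  assumes "finite \<gamma>" "Estar \<gamma> ha hg" "\<beta> \<in> \<gamma>" "a \<in> \<beta>"
  shows "ha a \<le> hg \<beta>"
  using assms by (auto simp: Estar_def)

lemma Estar_shift:
  assumes "finite \<gamma>" "Estar \<gamma> ha hg"
  shows "Estar \<gamma> (\<lambda>x. ha x + d) (\<lambda>\<beta>. hg \<beta> + d)"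
  unfolding Estar_def
proof
  fix a assume "a \<in> \<Union>\<gamma>"
  then have "Min ((\<lambda>\<beta>. hg \<beta> + d) ` {\<beta>\<in>\<gamma>. a \<in> \<beta>}) = Min (hg ` {\<beta>\<in>\<gamma>. a \<in> \<beta>}) + d"
    using assms(1) by (intro Min_add_commute) auto
  moreover have "ha a = Min (hg ` {\<beta>\<in>\<gamma>. a \<in> \<beta>})"
    using assms(2) \<open>a \<in> \<Union>\<gamma>\<close> unfolding Estar_def by blast
  ultimately show "ha a + d = Min ((\<lambda>\<beta>. hg \<beta> + d) ` {\<beta>\<in>\<gamma>. a \<in> \<beta>})"
    by simp
qed

lemma Sep_shift: "Sep \<gamma> k hg \<Longrightarrow> Sep \<gamma> k (\<lambda>\<beta>. hg \<beta> + d)"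
  by (simp add: Sep_def)

lemma Estar_reset:
  assumes "finite \<gamma>" "\<alpha> \<in> \<gamma>" "\<forall>\<beta>\<in>\<gamma>. 0 \<le> hg \<beta>" "Estar \<gamma> ha hg"
  shows "Estar \<gamma> (\<lambda>x. if x \<in> \<alpha> then 0 else ha x) (hg(\<alpha> := 0))"
  unfolding Estar_def
proof
  fix a assume a: "a \<in> \<Union>\<gamma>"
  show "(if a \<in> \<alpha> then 0 else ha a) = Min ((hg(\<alpha> := 0)) ` {\<beta>\<in>\<gamma>. a \<in> \<beta>})"
  proof (cases "a \<in> \<alpha>")
    case True
    then have "Min ((hg(\<alpha> := 0)) ` {\<beta>\<in>\<gamma>. a \<in> \<beta>}) = 0"
      using assms(1-3) by (intro Min_eqI) (auto intro!: rev_image_eqI[of \<alpha>])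
    then show ?thesis
      using True by simp
  next
    case False
    then have "(hg(\<alpha> := 0)) ` {\<beta>\<in>\<gamma>. a \<in> \<beta>} = hg ` {\<beta>\<in>\<gamma>. a \<in> \<beta>}"
      by (auto intro!: image_cong)
    moreover have "ha a = Min (hg ` {\<beta>\<in>\<gamma>. a \<in> \<beta>})"
      using a assms(4) unfolding Estar_def by blast
    ultimately show ?thesis
      using False by simp
  qed
qed

lemma Sep_reset:
  assumes "finite \<gamma>" "Estar \<gamma> ha hg" "\<forall>x\<in>\<alpha>. k x \<le> ha x" "Sep \<gamma> k hg"
  shows "Sep \<gamma> k (hg(\<alpha> := 0))"
proof -
  have reset_side: "k a \<le> \<bar>hg \<beta>\<bar>" if "a \<in> \<alpha>" "\<beta> \<in> \<gamma>" "a \<in> \<beta>" for a \<beta>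
    using assms(3) that Estar_le[OF assms(1,2) that(2,3)] by fastforce
  show ?thesis
    unfolding Sep_def
  proof (intro ballI impI)
    fix a \<beta>1 \<beta>2
    assume "a \<in> \<Union>\<gamma>" "\<beta>1 \<in> \<gamma>" "\<beta>2 \<in> \<gamma>" and "\<beta>1 \<noteq> \<beta>2 \<and> a \<in> \<beta>1 \<and> a \<in> \<beta>2"
    then show "k a \<le> \<bar>(hg(\<alpha> := 0)) \<beta>1 - (hg(\<alpha> := 0)) \<beta>2\<bar>"
      using assms(4) reset_side[of a \<beta>1] reset_side[of a \<beta>2] unfolding Sep_def by auto
  qed
qed

lemma finite_ex_spaced_values:
  assumes "finite S" "0 \<le> c"
  obtains f :: "'b \<Rightarrow> real"
  where "\<forall>x\<in>S. c \<le> f x" "\<forall>x\<in>S. \<forall>y\<in>S. x \<noteq> y \<longrightarrow> c \<le> \<bar>f x - f y\<bar>"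
proof -
  obtain g :: "'b \<Rightarrow> nat" where g: "inj_on g S"
    using finite_imp_inj_to_nat_seg[OF assms(1)] by blast
  define f where "f x = c * (1 + real (g x))" for x
  have "c \<le> \<bar>f x - f y\<bar>" if "x \<in> S" "y \<in> S" "x \<noteq> y" for x y
  proof -
    have "g x \<noteq> g y"
      using g that by (auto dest: inj_onD)
    then have "1 \<le> \<bar>real (g x) - real (g y)\<bar>"
      by linarith
    then have "c * 1 \<le> c * \<bar>real (g x) - real (g y)\<bar>"
      using assms(2) by (rule mult_left_mono)
    moreover have "f x - f y = c * (real (g x) - real (g y))"
      by (simp add: f_def algebra_simps)
    ultimately show ?thesis
      using assms(2) by (simp add: abs_mult)
  qed
  moreover have "\<forall>x\<in>S. c \<le> f x"
    using assms(2) by (simp add: f_def algebra_simps)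
  ultimately show ?thesis
    using that by blast
qed

lemma ex_initial_glue:
  assumes "finite \<gamma>" "\<forall>x\<in>\<Union>\<gamma>. k x \<le> c" "0 \<le> c"
  obtains ha hg where "\<forall>x. c \<le> ha x" "\<forall>\<beta>\<in>\<gamma>. c \<le> hg \<beta>" "Estar \<gamma> ha hg" "Sep \<gamma> k hg"
proof -
  obtain hg where hg_ge: "\<forall>\<beta>\<in>\<gamma>. c \<le> hg \<beta>"
    and spaced: "\<forall>\<alpha>\<in>\<gamma>. \<forall>\<beta>\<in>\<gamma>. \<alpha> \<noteq> \<beta> \<longrightarrow> c \<le> \<bar>hg \<alpha> - hg \<beta>\<bar>"
    using finite_ex_spaced_values[OF assms(1,3)] by blast
  define ha where "ha x = (if x \<in> \<Union>\<gamma> then Min (hg ` {\<beta>\<in>\<gamma>. x \<in> \<beta>}) else c)" for x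
  have "c \<le> ha x" for x
    using assms(1) hg_ge by (auto simp: ha_def intro!: Min.boundedI)
  moreover have "Estar \<gamma> ha hg"
    by (simp add: Estar_def ha_def)
  moreover have "Sep \<gamma> k hg"
    using assms(2) spaced unfolding Sep_def by (meson order.trans)
  ultimately show ?thesis
    using that hg_ge by blast
qed

lemma hview_Orig [simp]: "hview V h0 ha i \<circ> Orig = view V i"
  by (auto simp: hview_def view_def)

lemma view_vshift: "view (vshift V d) i = vshift (view V i) d"
  by (auto simp: view_def vshift_def)

lemma hview_vshift: "vshift (hview V h0 ha i) d = hview (vshift V d) (h0 + d) (\<lambda>x. ha x + d) i"
  by (auto simp: hview_def vshift_def split: hclock.splits)

lemma tpc_compose [simp]: "tpc (compose n B \<gamma>) L V \<longleftrightarrow> (\<forall>i<n. tpc (B i) (L i) (view V i))"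
  by (simp add: compose_def)

lemma compose_step_Del_target:
  "step (compose n B \<gamma>) (L, V) (Del d) s' \<Longrightarrow> s' = (L, vshift V d)"
  by (cases rule: step.cases) auto

lemma compose_step_Del_hist:
  assumes "step (compose n B \<gamma>) (L, V) (Del d) s'" "i < n"
  shows "step (hist (B i)) (L i, hview V h0 ha i) (Del d)
           (L i, hview (vshift V d) (h0 + d) (\<lambda>x. ha x + d) i)"
proof -
  from assms(1) have "0 \<le> d" "\<forall>t\<in>{0..d}. tpc (compose n B \<gamma>) L (vshift V t)"
    by (cases; simp)+
  then have "step (hist (B i)) (L i, hview V h0 ha i) (Del d) (L i, vshift (hview V h0 ha i) d)"
    using assms(2) by (intro step.delay) (auto simp: vshift_comp view_vshift)
  then show ?thesis
    by (simp only: hview_vshift)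
qed

lemma compose_step_DisE:
  assumes "step (compose n B \<gamma>) (L, V) (Dis \<alpha>) (L', V')"
  obtains e where "\<alpha> \<in> \<gamma>"
    and "\<And>i a. (i, a) \<in> \<alpha> \<Longrightarrow> e i \<in> edges (B i) \<and> esrc (e i) = L i \<and> eact (e i) = a"
    and "\<And>i. i \<in> fst ` \<alpha> \<Longrightarrow> eguard (e i) (view V i)"
    and "V' = vreset V {(i, c). i \<in> fst ` \<alpha> \<and> c \<in> ereset (e i)}"
    and "L' = (\<lambda>j. if j \<in> fst ` \<alpha> then etgt (e j) else L j)"
    and "\<forall>i<n. tpc (B i) (L' i) (view V' i)"
  using assms by cases (auto simp: compose_def)

lemma edge_eta: "e = (esrc e, eact e, eguard e, ereset e, etgt e)"
  by (simp add: esrc_def eact_def eguard_def ereset_def etgt_def)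

lemma compose_step_Dis_active:
  assumes "step (compose n B \<gamma>) (L, V) (Dis \<alpha>) (L', V')" "(i, a) \<in> \<alpha>" "i < n"
  shows "step (hist (B i)) (L i, hview V h0 ha i) (Dis a)
           (L' i, hview V' h0 (\<lambda>x. if x \<in> \<alpha> then 0 else ha x) i)"
proof -
  obtain e where "\<alpha> \<in> \<gamma>"
    and e: "\<And>i a. (i, a) \<in> \<alpha> \<Longrightarrow> e i \<in> edges (B i) \<and> esrc (e i) = L i \<and> eact (e i) = a"
    and guard: "\<And>i. i \<in> fst ` \<alpha> \<Longrightarrow> eguard (e i) (view V i)"
    and V': "V' = vreset V {(i, c). i \<in> fst ` \<alpha> \<and> c \<in> ereset (e i)}"
    and L': "L' = (\<lambda>j. if j \<in> fst ` \<alpha> then etgt (e j) else L j)"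
    and tpc': "\<forall>i<n. tpc (B i) (L' i) (view V' i)"
    using assms(1) by (elim compose_step_DisE) (rule that)
  have active: "i \<in> fst ` \<alpha>"
    using assms(2) by force
  have "(L i, a, eguard (e i), ereset (e i), etgt (e i)) \<in> edges (B i)"
    using e[OF assms(2)] edge_eta[of "e i"] by simp
  then have "(L i, a, \<lambda>w. eguard (e i) (w \<circ> Orig), Orig ` ereset (e i) \<union> {HA a}, etgt (e i))
      \<in> edges (hist (B i))"
    by (rule edges_hist)
  moreover have "view V' i = vreset (view V i) (ereset (e i))"
    using active by (auto simp: V' view_def vreset_def)
  moreover have "L' i = etgt (e i)"
    using active by (simp add: L')
  ultimately have hist_step: "step (hist (B i)) (L i, hview V h0 ha i) (Dis a)
      (L' i, vreset (hview V h0 ha i) (Orig ` ereset (e i) \<union> {HA a}))"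
    using guard[OF active] tpc' assms(3)
    by (auto simp: vreset_hist_Orig simp del: Un_insert_right intro!: step.disc)
  have "(i, b) \<in> \<alpha> \<longleftrightarrow> b = a" for b
    using e[OF assms(2)] e[of i b] assms(2) by auto
  then have "vreset (hview V h0 ha i) (Orig ` ereset (e i) \<union> {HA a})
      = hview V' h0 (\<lambda>x. if x \<in> \<alpha> then 0 else ha x) i"
    using active by (auto simp: V' hview_def vreset_def fun_eq_iff split: hclock.splits)
  with hist_step show ?thesis
    by simp
qed

lemma compose_step_Dis_idle:
  assumes "step (compose n B \<gamma>) (L, V) (Dis \<alpha>) (L', V')" "\<forall>a. (i, a) \<notin> \<alpha>"
  shows "L' i = L i" "hview V' h0 (\<lambda>x. if x \<in> \<alpha> then 0 else ha x) i = hview V h0 ha i"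
  using assms
  by (elim compose_step_DisE; force simp: hview_def vreset_def split: hclock.splits)+

text \<open>A strengthening of \<open>Phi\<close>: reachability in \<open>B\<^sub>i\<^sup>h\<close> stands in for \<open>CI(B\<^sub>i\<^sup>h)\<close>, and each
component additionally carries a run that witnesses the history clocks \<open>h\<^sub>a\<close>.\<close>
definition hist_glue_inv :: "nat \<Rightarrow> (nat \<Rightarrow> ('l,'a,'c) ta) \<Rightarrow> (nat \<times> 'a) set set
    \<Rightarrow> (nat \<times> 'a \<Rightarrow> real) \<Rightarrow> (nat \<Rightarrow> 'l) \<times> (nat \<times> 'c \<Rightarrow> real) \<Rightarrow> bool" where
  "hist_glue_inv n B \<gamma> k s \<longleftrightarrow> (\<exists>h0 ha hg. 0 \<le> h0 \<and> (\<forall>x. 0 \<le> ha x) \<and> (\<forall>\<alpha>\<in>\<gamma>. 0 \<le> hg \<alpha>)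
     \<and> (\<forall>i<n. hist_consistent (B i) {a. (i, a) \<in> \<Union>\<gamma>} (\<lambda>a. k (i, a))
              (fst s i, hview (snd s) h0 ha i))
     \<and> Estar \<gamma> ha hg \<and> Sep \<gamma> k hg)"

lemma hist_glue_inv_initial:
  assumes "finite (\<Union>\<gamma>)" "initial (compose n B \<gamma>) s"
  shows "hist_glue_inv n B \<gamma> k s"
proof -
  obtain K where K: "\<forall>x\<in>\<Union>\<gamma>. k x \<le> K"
    using bdd_above_finite[OF finite_imageI[OF assms(1)], of k] by (auto simp: bdd_above_def)
  define c where "c = max 1 K"
  have c_ge: "1 \<le> c" "\<forall>x\<in>\<Union>\<gamma>. k x \<le> c"
    using K unfolding c_def by (auto simp: le_max_iff_disj)
  obtain ha hg where ha_ge: "\<forall>x. c \<le> ha x" and hg_ge: "\<forall>\<beta>\<in>\<gamma>. c \<le> hg \<beta>"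
    and glue: "Estar \<gamma> ha hg" "Sep \<gamma> k hg"
    using ex_initial_glue[OF finite_UnionD[OF assms(1)] c_ge(2)] c_ge(1) by auto
  obtain L V where s: "s = (L, V)"
    by fastforce
  have "hist_consistent (B i) {a. (i, a) \<in> \<Union>\<gamma>} (\<lambda>a. k (i, a)) (L i, hview V 0 ha i)"
    if "i < n" for i
  proof (rule hist_consistent_initial)
    have "L i = loc0 (B i)" "\<forall>x. 0 \<le> V x" "c0 (B i) (view V i)"
      using assms(2) that by (auto simp: s initial_def compose_def)
    moreover have "0 \<le> ha x" "0 < ha x" for x
      using ha_ge c_ge(1) by (meson order.trans zero_le_one less_le_trans zero_less_one)+
    ultimately show "initial (hist (B i)) (L i, hview V 0 ha i)"
      by (simp add: initial_def hist_def) (auto simp: hview_def split: hclock.splits)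
    show "\<forall>a\<in>{a. (i, a) \<in> \<Union>\<gamma>}. k (i, a) \<le> snd (L i, hview V 0 ha i) (HA a)"
      using ha_ge c_ge(2) by (force simp: hview_def intro: order.trans)
  qed
  moreover have "0 \<le> ha x" for x
    using ha_ge c_ge(1) by (meson order.trans zero_le_one)
  moreover have "\<forall>\<beta>\<in>\<gamma>. 0 \<le> hg \<beta>"
    using hg_ge c_ge(1) by (meson order.trans zero_le_one)
  ultimately show ?thesis
    unfolding hist_glue_inv_def s fst_conv snd_conv
    using glue by (intro exI[of _ 0] exI[of _ ha] exI[of _ hg]) simp
qed

lemma hist_glue_inv_Del:
  assumes "finite \<gamma>" "hist_glue_inv n B \<gamma> k (L, V)" "step (compose n B \<gamma>) (L, V) (Del d) s'"
  shows "hist_glue_inv n B \<gamma> k s'"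
proof -
  obtain h0 ha hg where nonneg: "0 \<le> h0" "\<forall>x. 0 \<le> ha x" "\<forall>\<alpha>\<in>\<gamma>. 0 \<le> hg \<alpha>"
    and cons: "\<forall>i<n. hist_consistent (B i) {a. (i, a) \<in> \<Union>\<gamma>} (\<lambda>a. k (i, a)) (L i, hview V h0 ha i)"
    and glue: "Estar \<gamma> ha hg" "Sep \<gamma> k hg"
    using assms(2) unfolding hist_glue_inv_def by auto
  have "0 \<le> d"
    using step_delay_nonneg[OF assms(3)] by simp
  have "hist_consistent (B i) {a. (i, a) \<in> \<Union>\<gamma>} (\<lambda>a. k (i, a))
      (L i, hview (vshift V d) (h0 + d) (\<lambda>x. ha x + d) i)" if "i < n" for i
    using cons that compose_step_Del_hist[OF assms(3) that] by (blast intro: hist_consistent_step)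
  moreover have "s' = (L, vshift V d)"
    using assms(3) by (rule compose_step_Del_target)
  ultimately show ?thesis
    unfolding hist_glue_inv_def
    using nonneg \<open>0 \<le> d\<close> Estar_shift[OF assms(1) glue(1)] Sep_shift[OF glue(2)]
    by (intro exI[of _ "h0 + d"] exI[of _ "\<lambda>x. ha x + d"] exI[of _ "\<lambda>\<beta>. hg \<beta> + d"]) auto
qed

lemma hist_glue_inv_Dis:
  assumes "finite \<gamma>" "wf_interactions n B \<gamma>" "\<forall>x\<in>\<Union>\<gamma>. min_sep (B (fst x)) (snd x) (k x)"
    and "hist_glue_inv n B \<gamma> k (L, V)" "step (compose n B \<gamma>) (L, V) (Dis \<alpha>) (L', V')"
  shows "hist_glue_inv n B \<gamma> k (L', V')"
proof -
  obtain h0 ha hg where nonneg: "0 \<le> h0" "\<forall>x. 0 \<le> ha x" "\<forall>\<alpha>\<in>\<gamma>. 0 \<le> hg \<alpha>"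
    and cons: "\<forall>i<n. hist_consistent (B i) {a. (i, a) \<in> \<Union>\<gamma>} (\<lambda>a. k (i, a)) (L i, hview V h0 ha i)"
    and glue: "Estar \<gamma> ha hg" "Sep \<gamma> k hg"
    using assms(4) unfolding hist_glue_inv_def by auto
  have "\<alpha> \<in> \<gamma>"
    using assms(5) by (rule compose_step_DisE)
  then have in_range: "i < n" if "(i, a) \<in> \<alpha>" for i a
    using assms(2) that unfolding wf_interactions_def by blast
  define ha' where "ha' x = (if x \<in> \<alpha> then 0 else ha x)" for x
  have "k x \<le> ha x" if "x \<in> \<alpha>" for x
  proof -
    obtain i a where x: "x = (i, a)"
      by fastforce
    have "(i, a) \<in> \<Union>\<gamma>"
      using \<open>\<alpha> \<in> \<gamma>\<close> that x by blast
    then have "a \<in> {a. (i, a) \<in> \<Union>\<gamma>}" "min_sep (B i) a (k (i, a))"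
      using assms(3)[rule_format, of "(i, a)"] by auto
    moreover have "hist_consistent (B i) {a. (i, a) \<in> \<Union>\<gamma>} (\<lambda>a. k (i, a)) (L i, hview V h0 ha i)"
      using cons in_range that x by blast
    moreover have "step (hist (B i)) (L i, hview V h0 ha i) (Dis a) (L' i, hview V' h0 ha' i)"
      unfolding ha'_def using compose_step_Dis_active[OF assms(5)] in_range that x by blast
    ultimately show ?thesis
      using hist_consistent_le_HA[where k = "\<lambda>a. k (i, a)"] x by (fastforce simp: hview_def)
  qed
  then have glue': "Estar \<gamma> ha' (hg(\<alpha> := 0))" "Sep \<gamma> k (hg(\<alpha> := 0))"
    unfolding ha'_def using Estar_reset[OF assms(1) \<open>\<alpha> \<in> \<gamma>\<close> nonneg(3) glue(1)]
      Sep_reset[OF assms(1) glue(1) _ glue(2)] by auto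
  have "hist_consistent (B i) {a. (i, a) \<in> \<Union>\<gamma>} (\<lambda>a. k (i, a)) (L' i, hview V' h0 ha' i)"
    if "i < n" for i
  proof (cases "\<exists>a. (i, a) \<in> \<alpha>")
    case True
    then show ?thesis
      unfolding ha'_def using cons that compose_step_Dis_active[OF assms(5)]
      by (blast intro: hist_consistent_step)
  next
    case False
    then show ?thesis
      unfolding ha'_def using cons that compose_step_Dis_idle[OF assms(5)] by auto
  qed
  then show ?thesis
    unfolding hist_glue_inv_def fst_conv snd_conv
    using nonneg glue' by (intro exI[of _ h0] exI[of _ ha'] exI[of _ "hg(\<alpha> := 0)"]) (auto simp: ha'_def)
qed

lemma finite_Union_interactions:
  assumes "\<forall>i<n. finite (acts (B i))" "wf_interactions n B \<gamma>"
  shows "finite (\<Union>\<gamma>)"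
proof (rule finite_subset)
  show "\<Union>\<gamma> \<subseteq> Sigma {..<n} (\<lambda>i. acts (B i))"
    using assms(2) unfolding wf_interactions_def by fast
  show "finite (Sigma {..<n} (\<lambda>i. acts (B i)))"
    using assms(1) by auto
qed

lemma hist_glue_inv_reachable:
  assumes "finite (\<Union>\<gamma>)" "wf_interactions n B \<gamma>"
    and "\<forall>x\<in>\<Union>\<gamma>. min_sep (B (fst x)) (snd x) (k x)"
    and "reachable (compose n B \<gamma>) s"
  shows "hist_glue_inv n B \<gamma> k s"
  using assms(4)
proof induction
  case (init s)
  show ?case
    using assms(1) init by (rule hist_glue_inv_initial)
next
  case (stp s lb s')
  have "finite \<gamma>"
    using assms(1) by (rule finite_UnionD)
  obtain L V L' V' where s: "s = (L, V)" and s': "s' = (L', V')"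
    by fastforce
  show ?case
  proof (cases lb)
    case (Del d)
    show ?thesis
      using \<open>finite \<gamma>\<close> stp.IH stp.hyps(2) unfolding s Del by (rule hist_glue_inv_Del)
  next
    case (Dis \<alpha>)
    show ?thesis
      using \<open>finite \<gamma>\<close> assms(2,3) stp.IH stp.hyps(2) unfolding s s' Dis
      by (rule hist_glue_inv_Dis)
  qed
qed

theorem corollary2:
  fixes n :: nat
    and B :: "nat \<Rightarrow> ('l,'a,'c) ta"
    and \<gamma> :: "(nat \<times> 'a) set set"
    and k :: "nat \<times> 'a \<Rightarrow> real"
    and CI :: "nat \<Rightarrow> 'l \<times> (('a,'c) hclock \<Rightarrow> real) \<Rightarrow> bool"
    and II :: "(nat \<Rightarrow> 'l) \<Rightarrow> bool"
  assumes fin_acts: "\<forall>i<n. finite (acts (B i))"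
    and edge_acts: "\<forall>i<n. \<forall>e\<in>edges (B i). eact e \<in> acts (B i)"
    and wf: "wf_interactions n B \<gamma>"
    and k_nonneg: "\<forall>x\<in>\<Union>\<gamma>. k x \<ge> 0"
    and k_sep: "\<forall>x\<in>\<Union>\<gamma>. min_sep (B (fst x)) (snd x) (k x)"
    and CI_inv: "\<forall>i<n. invariant (hist (B i)) (CI i)"
    and II_inv: "invariant (compose n B \<gamma>) (\<lambda>s. II (fst s))"
  shows "invariant (compose n B \<gamma>) (Phi n \<gamma> CI II k)"
  unfolding invariant_def
proof (intro allI impI)
  fix s assume reach: "reachable (compose n B \<gamma>) s"
  have "hist_glue_inv n B \<gamma> k s"
    using finite_Union_interactions[OF fin_acts wf] wf k_sep reach
    by (rule hist_glue_inv_reachable)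
  then obtain h0 ha hg where nonneg: "0 \<le> h0" "\<forall>x. 0 \<le> ha x" "\<forall>\<alpha>\<in>\<gamma>. 0 \<le> hg \<alpha>"
    and cons: "\<forall>i<n. hist_consistent (B i) {a. (i, a) \<in> \<Union>\<gamma>} (\<lambda>a. k (i, a))
                 (fst s i, hview (snd s) h0 ha i)"
    and glue: "Estar \<gamma> ha hg" "Sep \<gamma> k hg"
    unfolding hist_glue_inv_def by blast
  have "\<forall>i<n. CI i (fst s i, hview (snd s) h0 ha i)"
    using CI_inv cons unfolding invariant_def hist_consistent_def by blast
  moreover have "II (fst s)"
    using II_inv reach unfolding invariant_def by blast
  ultimately show "Phi n \<gamma> CI II k s"
    unfolding Phi_def using nonneg glue by blast
qed

end
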